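(* Consider the one-dimensional conservative forward Euler finite difference scheme $\mathbf{u}_i^{n+1}=\mathbf{u}_i^n-\lambda(\mathbf{f}_{i+1/2}-\mathbf{f}_{i-1/2})$, $\lambda=\Delta t/\Delta x$, with numerical fluxes of the form $\mathbf{f}_{i+1/2}=\alpha_{i+1/2}(\mathbf{w}^+_{i+1/2}-\mathbf{w}^-_{i+1/2})$, where $\mathbf{w}^\pm_{i+1/2}\in\mathbb{R}^6$ are given interface values and $\alpha_{i+1/2}=\max\{\alpha(\mathbf{u}_i^n),\alpha(\mathbf{u}_{i+1}^n)\}$. Let $\mathbf{w}_i^\pm=\mathbf{w}^\pm(\mathbf{u}_i^n)$ and $\mathbf{q}_i^{+,*}=\frac{1}{1-\hat w_N}(\mathbf{w}_i^+-\hat w_N\mathbf{w}^+_{i+1/2})$, $\mathbf{q}_i^{-,*}=\frac{1}{1-\hat w_1}(\mathbf{w}_i^--\hat w_1\mathbf{w}^-_{i-1/2})$. Assume that for all $i$: (1) $\mathbf{u}_i^n\in\mathbb{U}_{\mathrm{ad}}$; (2) $\mathbf{q}_i^{\pm,*}\in\mathbb{U}_{\mathrm{ad}}$ and $\mathbf{w}^\pm_{i+1/2}\in\mathbb{U}_{\mathrm{ad}}$. Then the scheme is positivity preserving, i.e. $\mathbf{u}_i^{n+1}\in\mathbb{U}_{\mathrm{ad}}$ for all $i$, provided the CFL condition $\frac{\alpha\,\Delta t}{\Delta x}\le\hat w_1$ holds, where $\alpha=\max_i\alpha(\mathbf{u}_i^n)$.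
   Context: Ten-Moment equations in 1-D: conservative variable $\mathbf{u}=(\rho,\rho v_1,\rho v_2,E_{11},E_{12},E_{22})^\top$; pressure components $p_{11}=2E_{11}-\rho v_1^2$, $p_{12}=2E_{12}-\rho v_1v_2$, $p_{22}=2E_{22}-\rho v_2^2$; $\mathbb{U}_{\mathrm{ad}}=\{\mathbf{u}:\rho>0,\ \mathbf{p}\text{ positive definite}\}$. Flux $\mathbf{f}(\mathbf{u})=\big(\rho v_1,\ \rho v_1^2+p_{11},\ \rho v_1v_2+p_{12},\ (E_{11}+p_{11})v_1,\ E_{12}v_1+\tfrac12(p_{11}v_2+p_{12}v_1),\ E_{22}v_1+p_{12}v_2\big)^\top$; wave speed $\alpha(\mathbf{u})=|v_1|+\sqrt{3p_{11}/\rho}$; $\mathbf{w}^\pm(\mathbf{u})=\frac12(\mathbf{u}\pm\mathbf{f}(\mathbf{u})/\alpha(\mathbf{u}))$. Uniform mesh with nodes $x_i$, spacing $\Delta x$, interfaces $x_{i+1/2}$. $\hat w_1,\dots,\hat w_N$ are the weights (normalized to sum to $1$ on a cell) of the $N$-point Gauss–Lobatto quadrature rule, $N\ge4$, so that $\hat w_1=\hat w_N$ (for $N=4$, $\hat w_1=1/12$). In the paper $\mathbf{w}^\pm_{i+1/2}=\pm\mathbf{f}^\pm_{i+1/2}/\alpha_{i+1/2}$, where $\mathbf{f}^\pm_{i+1/2}$ are WENO reconstructions of the Lax–Friedrichs split fluxes $\frac12(\mathbf{f}(\mathbf{u})\pm\alpha_{i+1/2}\mathbf{u})$, possibly modified by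 a scaling limiter. *)

theory Defs
  imports Complex_Main
begin

text \<open>States are vectors in R^6, represented as functions nat => real using the
components 0..5: (rho, rho v1, rho v2, E11, E12, E22). Only components 0..5 matter.\<close>

type_synonym vec6 = "nat \<Rightarrow> real"

definition rho :: "vec6 \<Rightarrow> real" where "rho u = u 0"
definition vel1 :: "vec6 \<Rightarrow> real" where "vel1 u = u 1 / u 0"
definition vel2 :: "vec6 \<Rightarrow> real" where "vel2 u = u 2 / u 0"

definition p11 :: "vec6 \<Rightarrow> real" where "p11 u = 2 * u 3 - rho u * vel1 u ^ 2"
definition p12 :: "vec6 \<Rightarrow> real" where "p12 u = 2 * u 4 - rho u * vel1 u * vel2 u"
definition p22 :: "vec6 \<Rightarrow> real" where "p22 u = 2 * u 5 - rho u * vel2 u ^ 2"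

definition pos_def2 :: "real \<Rightarrow> real \<Rightarrow> real \<Rightarrow> bool" where
  "pos_def2 a b c \<longleftrightarrow> (\<forall>x y::real. (x, y) \<noteq> (0, 0) \<longrightarrow> a * x^2 + 2 * b * x * y + c * y^2 > 0)"

definition U_ad :: "vec6 \<Rightarrow> bool" where
  "U_ad u \<longleftrightarrow> rho u > 0 \<and> pos_def2 (p11 u) (p12 u) (p22 u)"

definition flux :: "vec6 \<Rightarrow> vec6" where
  "flux u k =
     (if k = 0 then rho u * vel1 u
      else if k = 1 then rho u * vel1 u ^ 2 + p11 u
      else if k = 2 then rho u * vel1 u * vel2 u + p12 u
      else if k = 3 then (u 3 + p11 u) * vel1 u
      else if k = 4 then u 4 * vel1 u + (p11 u * vel2 u + p12 u * vel1 u) / 2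
      else if k = 5 then u 5 * vel1 u + p12 u * vel2 u
      else 0)"

definition alpha :: "vec6 \<Rightarrow> real" where
  "alpha u = \<bar>vel1 u\<bar> + sqrt (3 * p11 u / rho u)"

definition w_plus :: "vec6 \<Rightarrow> vec6" where
  "w_plus u k = (u k + flux u k / alpha u) / 2"
definition w_minus :: "vec6 \<Rightarrow> vec6" where
  "w_minus u k = (u k - flux u k / alpha u) / 2"

text \<open>Endpoint weights of the N-point Gauss--Lobatto rule, normalised to sum 1 on a cell
 (standard value 2/(N(N-1)) on [-1,1], halved).\<close>
definition gl_w1 :: "nat \<Rightarrow> real" where "gl_w1 N = 1 / (real N * (real N - 1))"
definition gl_wN :: "nat \<Rightarrow> real" where "gl_wN N = 1 / (real N * (real N - 1))"

text \<open>The scheme. u i = u_i^n (i ranges over all integers), wp i = w^+_{i+1/2},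
 wm i = w^-_{i+1/2}.\<close>
definition alpha_half :: "(int \<Rightarrow> vec6) \<Rightarrow> int \<Rightarrow> real" where
  "alpha_half u i = max (alpha (u i)) (alpha (u (i + 1)))"

definition num_flux :: "(int \<Rightarrow> vec6) \<Rightarrow> (int \<Rightarrow> vec6) \<Rightarrow> (int \<Rightarrow> vec6) \<Rightarrow> int \<Rightarrow> vec6" where
  "num_flux u wp wm i k = alpha_half u i * (wp i k - wm i k)"

definition update :: "real \<Rightarrow> real \<Rightarrow> (int \<Rightarrow> vec6) \<Rightarrow> (int \<Rightarrow> vec6) \<Rightarrow> (int \<Rightarrow> vec6) \<Rightarrow> int \<Rightarrow> vec6" where
  "update dt dx u wp wm i k =
     u i k - (dt / dx) * (num_flux u wp wm i k - num_flux u wp wm (i - 1) k)"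

definition q_plus :: "nat \<Rightarrow> (int \<Rightarrow> vec6) \<Rightarrow> (int \<Rightarrow> vec6) \<Rightarrow> int \<Rightarrow> vec6" where
  "q_plus N u wp i k = (w_plus (u i) k - gl_wN N * wp i k) / (1 - gl_wN N)"
definition q_minus :: "nat \<Rightarrow> (int \<Rightarrow> vec6) \<Rightarrow> (int \<Rightarrow> vec6) \<Rightarrow> int \<Rightarrow> vec6" where
  "q_minus N u wm i k = (w_minus (u i) k - gl_w1 N * wm (i - 1) k) / (1 - gl_w1 N)"

end

theory Submission
  imports Defs
begin

text \<open>Writing \<open>m\<close> for the momentum and \<open>E\<close> for the energy tensor, the pressure quadratic
  form is \<open>2 E(\<xi>,\<xi>) - (m\<cdot>\<xi>)\<^sup>2/\<rho>\<close>. The inequality \<open>(s + t)\<^sup>2/(a + b) \<le> s\<^sup>2/a + t\<^sup>2/b\<close> for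
  \<open>a, b > 0\<close> makes this form superadditive in the state, so the admissible set is a convex
  cone. Since \<open>w\<^sup>+(u) + w\<^sup>-(u) = u\<close>, the updated state is a combination of the six admissible
  states \<open>q\<^sup>\<plusminus>\<^sup>,\<^sup>*\<close>, \<open>w\<^sup>\<plusminus>\<close> at \<open>i \<plusminus> 1/2\<close> whose coefficients \<open>1 - \<omega>\<^sub>1\<close>, \<open>\<omega>\<^sub>1 - \<lambda>\<alpha>\<close> and \<open>\<lambda>\<alpha>\<close> are
  nonnegative exactly under the CFL condition (the identity uses \<open>\<omega>\<^sub>1 = \<omega>\<^sub>N\<close>).\<close>

definition pressure_form :: "vec6 \<Rightarrow> real \<Rightarrow> real \<Rightarrow> real" where
  "pressure_form u x y = 2 * (u 3 * x^2 + 2 * u 4 * x * y + u 5 * y^2) - (u 1 * x + u 2 * y)^2 / u 0"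

lemma pressure_form_eq:
  "u 0 \<noteq> 0 \<Longrightarrow> p11 u * x^2 + 2 * p12 u * x * y + p22 u * y^2 = pressure_form u x y"
  unfolding pressure_form_def p11_def p12_def p22_def rho_def vel1_def vel2_def
  by (simp add: field_simps power2_eq_square)

lemma U_ad_iff_pressure_form:
  "U_ad u \<longleftrightarrow> u 0 > 0 \<and> (\<forall>x y. (x, y) \<noteq> (0, 0) \<longrightarrow> pressure_form u x y > 0)"
  unfolding U_ad_def pos_def2_def using pressure_form_eq[of u] by (auto simp: rho_def)

lemma sum_sq_div_sum_le:
  fixes a b s t :: real
  assumes "a > 0" "b > 0"
  shows "(s + t)^2 / (a + b) \<le> s^2 / a + t^2 / b"
proof -
  have "0 \<le> (s * b - t * a)^2" by simp
  then have "(s + t)^2 * (a * b) \<le> (s^2 * b + t^2 * a) * (a + b)"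
    by (simp add: power2_eq_square algebra_simps)
  with assms show ?thesis by (simp add: field_simps)
qed

lemma pressure_form_add_ge:
  assumes "a 0 > 0" "b 0 > 0"
  shows "pressure_form (\<lambda>k. a k + b k) x y \<ge> pressure_form a x y + pressure_form b x y"
  using sum_sq_div_sum_le[OF assms, of "a 1 * x + a 2 * y" "b 1 * x + b 2 * y"]
  unfolding pressure_form_def by (simp add: algebra_simps)

lemma U_ad_scale:
  assumes "U_ad a" "c > 0"
  shows "U_ad (\<lambda>k. c * a k)"
proof -
  have "pressure_form (\<lambda>k. c * a k) x y = c * pressure_form a x y" for x y
    using assms unfolding pressure_form_def U_ad_iff_pressure_form
    by (simp add: field_simps power2_eq_square)
  with assms show ?thesis unfolding U_ad_iff_pressure_form by auto
qed

lemma U_ad_add: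
  assumes "U_ad a" "U_ad b"
  shows "U_ad (\<lambda>k. a k + b k)"
proof -
  have pos: "a 0 > 0" "b 0 > 0"
    and forms: "(x, y) \<noteq> (0, 0) \<Longrightarrow> pressure_form a x y > 0 \<and> pressure_form b x y > 0" for x y
    using assms unfolding U_ad_iff_pressure_form by auto
  show ?thesis
    unfolding U_ad_iff_pressure_form
    using pos forms pressure_form_add_ge[of a b, OF pos] by (smt (verit))
qed

lemma U_ad_add_scaled:
  assumes "U_ad a" "U_ad b" "c \<ge> 0"
  shows "U_ad (\<lambda>k. a k + c * b k)"
proof (cases "c = 0")
  case True
  with assms(1) show ?thesis by simp
next
  case False
  with assms show ?thesis using U_ad_add U_ad_scale by simp
qed

lemma alpha_nonneg:
  assumes "U_ad u"
  shows "alpha u \<ge> 0"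
proof -
  have "p11 u * 1^2 + 2 * p12 u * 1 * 0 + p22 u * 0^2 > 0"
    using assms unfolding U_ad_def pos_def2_def by (metis one_neq_zero prod.inject)
  moreover have "rho u > 0" using assms U_ad_def by auto
  ultimately show ?thesis unfolding alpha_def by simp
qed

lemma alpha_half_bounds:
  assumes "\<forall>i. U_ad (u i)" and "bdd_above (range (\<lambda>i. alpha (u i)))"
  shows "0 \<le> alpha_half u i" and "alpha_half u i \<le> (SUP j. alpha (u j))"
  using assms alpha_nonneg cSUP_upper[OF _ assms(2)]
  unfolding alpha_half_def by (auto simp: le_max_iff_disj)

lemma gl_w1_bounds:
  assumes "N \<ge> 2"
  shows "0 < gl_w1 N" and "gl_w1 N < 1"
proof -
  have "real N * (real N - 1) \<ge> 2 * 1" using assms by (intro mult_mono) auto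
  then show "0 < gl_w1 N" "gl_w1 N < 1" unfolding gl_w1_def by auto
qed

lemma update_eq_conic_combination:
  fixes u wp wm :: "int \<Rightarrow> vec6" and dt dx :: real and i :: int
  assumes "gl_w1 N \<noteq> 1"
  defines "\<omega> \<equiv> gl_w1 N" and "l \<equiv> dt / dx"
    and "a\<^sub>R \<equiv> alpha_half u i" and "a\<^sub>L \<equiv> alpha_half u (i - 1)"
  shows "update dt dx u wp wm i = (\<lambda>k.
      (1 - \<omega>) * q_plus N u wp i k + (1 - \<omega>) * q_minus N u wm i k
    + (\<omega> - l * a\<^sub>R) * wp i k + (\<omega> - l * a\<^sub>L) * wm (i - 1) k
    + (l * a\<^sub>R) * wm i k + (l * a\<^sub>L) * wp (i - 1) k)"
proof -
  have "w_plus (u i) k = (1 - \<omega>) * q_plus N u wp i k + \<omega> * wp i k"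
    and "w_minus (u i) k = (1 - \<omega>) * q_minus N u wm i k + \<omega> * wm (i - 1) k" for k
    using assms(1) unfolding \<omega>_def q_plus_def q_minus_def gl_wN_def gl_w1_def by simp_all
  moreover have "u i k = w_plus (u i) k + w_minus (u i) k" for k
    unfolding w_plus_def w_minus_def by (simp add: field_simps)
  ultimately have "u i k = (1 - \<omega>) * q_plus N u wp i k + \<omega> * wp i k
    + (1 - \<omega>) * q_minus N u wm i k + \<omega> * wm (i - 1) k" for k
    by simp
  then show ?thesis
    unfolding l_def a\<^sub>R_def a\<^sub>L_def by (intro ext) (simp add: update_def num_flux_def algebra_simps)
qed

theorem theorem3:
  fixes u wp wm :: "int \<Rightarrow> vec6" and N :: nat and dt dx :: real
  assumes "N \<ge> 4" and "dt > 0" and "dx > 0"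
    and "\<forall>i. U_ad (u i)"
    and "\<forall>i. U_ad (q_plus N u wp i) \<and> U_ad (q_minus N u wm i)"
    and "\<forall>i. U_ad (wp i) \<and> U_ad (wm i)"
    and "bdd_above (range (\<lambda>i. alpha (u i)))"
    and "(SUP i. alpha (u i)) * dt / dx \<le> gl_w1 N"
  shows "\<forall>i. U_ad (update dt dx u wp wm i)"
proof
  fix i
  define \<omega> l where "\<omega> = gl_w1 N" and "l = dt / dx"
  have \<omega>: "0 < \<omega>" "\<omega> < 1" using gl_w1_bounds assms(1) unfolding \<omega>_def by auto
  have cfl: "0 \<le> l * alpha_half u j \<and> l * alpha_half u j \<le> \<omega>" for j
  proof -
    have "0 < l" using assms(2,3) by (simp add: l_def)
    then have "l * alpha_half u j \<le> l * (SUP i. alpha (u i))"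
      using alpha_half_bounds(2)[OF assms(4,7)] by (simp add: mult_left_mono)
    with alpha_half_bounds(1)[OF assms(4,7)] assms(2,3,8) show ?thesis
      by (simp add: \<omega>_def l_def mult.commute)
  qed
  have "U_ad (\<lambda>k. (1 - \<omega>) * q_plus N u wp i k + (1 - \<omega>) * q_minus N u wm i k
    + (\<omega> - l * alpha_half u i) * wp i k + (\<omega> - l * alpha_half u (i - 1)) * wm (i - 1) k
    + (l * alpha_half u i) * wm i k + (l * alpha_half u (i - 1)) * wp (i - 1) k)"
    using assms(5,6) \<omega> cfl[of i] cfl[of "i - 1"]
    by (intro U_ad_add_scaled U_ad_scale) auto
  then show "U_ad (update dt dx u wp wm i)"
    using update_eq_conic_combination[of N dt dx u wp wm i] \<omega> by (simp add: \<omega>_def l_def)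
qed

end
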